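(* For every forest $F$, $A(F)=\{x\in T(r_1;F): P(x)\succ\max\{\tfrac12P(r_1),P(r_2)\}\}$, where $P(x)\succ\frac12P(r_1)$ means $P(x)>\frac12P(r_1)$ or ($P(x)=\frac12P(r_1)$ and $x<r_1$), and $P(x)\succ P(r_2)$ means $P(x)>P(r_2)$ or ($P(x)=P(r_2)$ and $x<r_2$).
   Context: Let $N$ be a finite, totally ordered set of vertices. A directed forest on $N$ is a directed acyclic graph on $N$ with every out-degree at most $1$. For a forest $F$: roots are vertices with no out-edge; $T(x;F)$ is the subtree rooted at $x$ (vertices with a directed path to $x$, including $x$); $P(x)=|T(x;F)|$; $F_x$ is $F$ with the out-edge of $x$ removed (if any). Write $P(x)\succ P(y)$ iff $P(x)>P(y)$ or ($P(x)=P(y)$ and $x<y$); let $r_1,r_2,\dots$ be the roots of $F$ in decreasing $\succ$-order, and $r_1(F')$ the $\succ$-maximal root of a forest $F'$. $A(F)=\{x\in N: x=r_1(F_x)\}$. If $F$ has only one root, the condition involving $r_2$ is considered vacuous. *)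

theory Defs
  imports Complex_Main
begin

definition forest :: "'a set \<Rightarrow> ('a \<times> 'a) set \<Rightarrow> bool" where
  "forest N E \<longleftrightarrow> finite N \<and> E \<subseteq> N \<times> N \<and> acyclic E \<and>
     (\<forall>x y z. (x, y) \<in> E \<longrightarrow> (x, z) \<in> E \<longrightarrow> y = z)"

definition roots :: "'a set \<Rightarrow> ('a \<times> 'a) set \<Rightarrow> 'a set" where
  "roots N E = {x \<in> N. \<forall>y. (x, y) \<notin> E}"

definition subtree :: "'a set \<Rightarrow> ('a \<times> 'a) set \<Rightarrow> 'a \<Rightarrow> 'a set" where
  "subtree N E x = {y \<in> N. (y, x) \<in> E\<^sup>*}"

definition P :: "'a set \<Rightarrow> ('a \<times> 'a) set \<Rightarrow> 'a \<Rightarrow> nat" where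
  "P N E x = card (subtree N E x)"

definition cut :: "('a \<times> 'a) set \<Rightarrow> 'a \<Rightarrow> ('a \<times> 'a) set" where
  "cut E x = {(a, b) \<in> E. a \<noteq> x}"

definition succ :: "'a set \<Rightarrow> ('a \<times> 'a) set \<Rightarrow> 'a::linorder \<Rightarrow> 'a \<Rightarrow> bool" where
  "succ N E x y \<longleftrightarrow> P N E x > P N E y \<or> (P N E x = P N E y \<and> x < y)"

definition succ_max :: "'a set \<Rightarrow> ('a \<times> 'a) set \<Rightarrow> 'a::linorder set \<Rightarrow> 'a" where
  "succ_max N E S = (THE r. r \<in> S \<and> (\<forall>r' \<in> S. r' \<noteq> r \<longrightarrow> succ N E r r'))"

definition r1 :: "'a set \<Rightarrow> ('a \<times> 'a) set \<Rightarrow> 'a::linorder" where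
  "r1 N E = succ_max N E (roots N E)"

definition r2 :: "'a set \<Rightarrow> ('a \<times> 'a) set \<Rightarrow> 'a::linorder" where
  "r2 N E = succ_max N E (roots N E - {r1 N E})"

definition A :: "'a set \<Rightarrow> ('a \<times> 'a) set \<Rightarrow> 'a::linorder set" where
  "A N E = {x \<in> N. x = r1 N (cut E x)}"

end

theory Submission imports Defs begin

text \<open>Removing the out-edge of a non-root x turns x into a new root with tree T(x;F), shrinks the
  tree of the root r above x by exactly P(x), and leaves all other trees unchanged. So x = r_1(F_x)
  iff P(x) \<succ> P(r) - P(x), i.e. P(x) \<succ> P(r)/2, and x beats every other root of F. When
  r \<noteq> r_1 this fails at r_1, because r_1 \<succ> r \<succ> x; when r = r_1, beating every root other
  than r_1 means beating r_2. A root x has F_x = F, so it lies in A(F) iff x = r_1.\<close>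

lemma forestD:
  assumes "forest N E"
  shows "finite N" "E \<subseteq> N \<times> N" "acyclic E" "single_valued E"
  using assms unfolding forest_def single_valued_def by auto

lemma forest_trancl_irrefl: "forest N E \<Longrightarrow> (x, x) \<notin> E\<^sup>+"
  using forestD(3) unfolding acyclic_def by blast

lemma subtree_subset: "subtree N E x \<subseteq> N"
  unfolding subtree_def by auto

lemma finite_subtree: "forest N E \<Longrightarrow> finite (subtree N E x)"
  by (rule finite_subset[OF subtree_subset forestD(1)])

lemma finite_roots: "forest N E \<Longrightarrow> finite (roots N E)"
  by (rule finite_subset[OF _ forestD(1)]) (auto simp: roots_def)

lemma self_in_subtree: "x \<in> N \<Longrightarrow> x \<in> subtree N E x"
  unfolding subtree_def by auto

lemma subtree_mono: "(x, r) \<in> E\<^sup>* \<Longrightarrow> subtree N E x \<subseteq> subtree N E r"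
  unfolding subtree_def using rtrancl_trans by fastforce

lemma rtrancl_from_root: "r \<in> roots N E \<Longrightarrow> (r, y) \<in> E\<^sup>* \<Longrightarrow> y = r"
  unfolding roots_def by (metis (mono_tags, lifting) converse_rtranclE mem_Collect_eq)

lemma ex_root_above:
  assumes "forest N E" "x \<in> N"
  shows "\<exists>r \<in> roots N E. (x, r) \<in> E\<^sup>*"
proof -
  have "wf (E\<inverse>)"
    using forestD[OF assms(1)] finite_subset finite_acyclic_wf_converse by blast
  then show ?thesis using assms(2)
  proof (induction x rule: wf_induct_rule)
    case (less x)
    show ?case
    proof (cases "x \<in> roots N E")
      case False
      then obtain y where y: "(x, y) \<in> E" using less.prems unfolding roots_def by blast
      then have "y \<in> N" using forestD(2)[OF assms(1)] by blast
      with less.IH y obtain r where "r \<in> roots N E" "(y, r) \<in> E\<^sup>*" by blast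
      with y show ?thesis by (meson converse_rtrancl_into_rtrancl)
    qed auto
  qed
qed

lemma root_above_unique:
  assumes "forest N E" "r \<in> roots N E" "r' \<in> roots N E" "(x, r) \<in> E\<^sup>*" "(x, r') \<in> E\<^sup>*"
  shows "r = r'"
  using single_valued_confluent[OF forestD(4)[OF assms(1)] assms(4,5)]
    rtrancl_from_root[OF assms(2)] rtrancl_from_root[OF assms(3)] by metis

lemma root_in_subtree_iff:
  "x \<in> roots N E \<Longrightarrow> x \<in> subtree N E r \<longleftrightarrow> x = r"
  using rtrancl_from_root[of x N E r] unfolding subtree_def roots_def by auto

lemma P_pos: "forest N E \<Longrightarrow> x \<in> N \<Longrightarrow> P N E x > 0"
  unfolding P_def using finite_subtree self_in_subtree by (metis card_gt_0_iff empty_iff)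

lemma P_less_P_above:
  assumes "forest N E" "(x, r) \<in> E\<^sup>*" "x \<noteq> r"
  shows "P N E x < P N E r"
proof -
  have "(x, r) \<in> E\<^sup>+" using assms(2,3) by (simp add: rtrancl_eq_or_trancl)
  then have "r \<in> N" using trancl_subset_Sigma[OF forestD(2)[OF assms(1)]] by blast
  have "(r, x) \<notin> E\<^sup>*"
  proof
    assume "(r, x) \<in> E\<^sup>*"
    with \<open>(x, r) \<in> E\<^sup>+\<close> have "(x, x) \<in> E\<^sup>+" by (rule trancl_rtrancl_trancl)
    then show False using forest_trancl_irrefl[OF assms(1)] by blast
  qed
  then have "r \<in> subtree N E r - subtree N E x"
    using \<open>r \<in> N\<close> unfolding subtree_def by simp
  then have "subtree N E x \<subset> subtree N E r" using subtree_mono[OF assms(2)] by blast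
  then show ?thesis unfolding P_def by (simp add: psubset_card_mono finite_subtree[OF assms(1)])
qed

lemma roots_cut: "x \<in> N \<Longrightarrow> roots N (cut E x) = insert x (roots N E)"
  unfolding roots_def cut_def by auto

lemma cut_root: "x \<in> roots N E \<Longrightarrow> cut E x = E"
  unfolding roots_def cut_def by auto

lemma rtrancl_cut_subset: "(cut E x)\<^sup>* \<subseteq> E\<^sup>*"
  by (rule rtrancl_mono) (auto simp: cut_def)

lemma rtrancl_cut_if_avoids:
  assumes "(y, z) \<in> E\<^sup>*" "\<not> ((y, x) \<in> E\<^sup>* \<and> (x, z) \<in> E\<^sup>+)"
  shows "(y, z) \<in> (cut E x)\<^sup>*"
  using assms
proof (induction rule: converse_rtrancl_induct)
  case (step y w)
  then have "y \<noteq> x" by (meson rtrancl_into_trancl2 rtrancl.rtrancl_refl)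
  with step.hyps(1) have "(y, w) \<in> cut E x" unfolding cut_def by simp
  moreover have "(w, z) \<in> (cut E x)\<^sup>*"
    using step by (meson converse_rtrancl_into_rtrancl)
  ultimately show ?case by (rule converse_rtrancl_into_rtrancl)
qed simp

lemma rtrancl_cut_iff:
  assumes "\<not> ((y, x) \<in> E\<^sup>* \<and> (x, z) \<in> E\<^sup>+)"
  shows "(y, z) \<in> (cut E x)\<^sup>* \<longleftrightarrow> (y, z) \<in> E\<^sup>*"
proof
  show "(y, z) \<in> (cut E x)\<^sup>* \<Longrightarrow> (y, z) \<in> E\<^sup>*" by (rule subsetD[OF rtrancl_cut_subset])
  show "(y, z) \<in> E\<^sup>* \<Longrightarrow> (y, z) \<in> (cut E x)\<^sup>*" by (rule rtrancl_cut_if_avoids[OF _ assms])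
qed

lemma subtree_cut_self:
  assumes "forest N E"
  shows "subtree N (cut E x) x = subtree N E x"
  using forest_trancl_irrefl[OF assms] unfolding subtree_def by (simp add: rtrancl_cut_iff)

lemma subtree_cut_unreachable:
  assumes "(x, r) \<notin> E\<^sup>*"
  shows "subtree N (cut E x) r = subtree N E r"
proof -
  have "(x, r) \<notin> E\<^sup>+" using assms by (meson trancl_into_rtrancl)
  then show ?thesis unfolding subtree_def by (simp add: rtrancl_cut_iff)
qed

lemma subtree_cut_above:
  assumes "forest N E" "(x, r) \<in> E\<^sup>*" "x \<noteq> r"
  shows "subtree N (cut E x) r = subtree N E r - subtree N E x"
proof -
  note no_cycle = forest_trancl_irrefl[OF assms(1), of x]
  have "(y, r) \<notin> (cut E x)\<^sup>*" if "(y, x) \<in> E\<^sup>*" for y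
  proof
    assume yr: "(y, r) \<in> (cut E x)\<^sup>*"
    have yx: "(y, x) \<in> (cut E x)\<^sup>*"
      using that no_cycle by (simp add: rtrancl_cut_iff)
    have "single_valued (cut E x)"
      by (rule single_valued_subset[OF _ forestD(4)[OF assms(1)]]) (auto simp: cut_def)
    from single_valued_confluent[OF this yx yr] show False
    proof
      assume "(x, r) \<in> (cut E x)\<^sup>*"
      then have "r = x" by (rule converse_rtranclE) (auto simp: cut_def)
      then show False using assms(3) by simp
    next
      assume "(r, x) \<in> (cut E x)\<^sup>*"
      then have "(r, x) \<in> E\<^sup>*" by (rule subsetD[OF rtrancl_cut_subset])
      with assms(2,3) have "(x, x) \<in> E\<^sup>+" by (simp add: rtrancl_eq_or_trancl)
      then show False using no_cycle by simp
    qed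
  qed
  then have "(y, r) \<in> (cut E x)\<^sup>* \<longleftrightarrow> (y, r) \<in> E\<^sup>* \<and> (y, x) \<notin> E\<^sup>*" for y
    using rtrancl_cut_iff[of y x E r] by blast
  then show ?thesis unfolding subtree_def by auto
qed

lemma succ_asym: "succ N E a b \<Longrightarrow> \<not> succ N E b a"
  unfolding succ_def by auto

lemma succ_trans: "succ N E a b \<Longrightarrow> succ N E b c \<Longrightarrow> succ N E a c"
  unfolding succ_def by auto

lemma ex_succ_greatest:
  assumes "finite S" "S \<noteq> {}"
  shows "\<exists>m\<in>S. \<forall>r\<in>S. r \<noteq> m \<longrightarrow> succ N E m r"
proof -
  define p where "p = Max (P N E ` S)"
  define m where "m = Min {x \<in> S. P N E x = p}"
  have "p \<in> P N E ` S" unfolding p_def using assms by simp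
  then have m: "m \<in> S" "P N E m = p" unfolding m_def using Min_in[of "{x \<in> S. P N E x = p}"] assms(1) by auto
  have "succ N E m r" if "r \<in> S" "r \<noteq> m" for r
  proof (cases "P N E r = p")
    case True
    then have "m \<le> r" unfolding m_def using assms(1) that(1) by (intro Min_le) auto
    with True m(2) that(2) show ?thesis unfolding succ_def by auto
  next
    case False
    moreover have "P N E r \<le> p" unfolding p_def using assms(1) that(1) by simp
    ultimately show ?thesis using m(2) unfolding succ_def by simp
  qed
  with m(1) show ?thesis by blast
qed

lemma succ_max_eqI:
  assumes "m \<in> S" "\<forall>r\<in>S. r \<noteq> m \<longrightarrow> succ N E m r"
  shows "succ_max N E S = m"
  unfolding succ_max_def
proof (rule the_equality)
  fix m' assume m': "m' \<in> S \<and> (\<forall>r\<in>S. r \<noteq> m' \<longrightarrow> succ N E m' r)"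
  show "m' = m"
  proof (rule ccontr)
    assume "m' \<noteq> m"
    then have "succ N E m' m" "succ N E m m'" using assms m' by auto
    then show False using succ_asym by blast
  qed
qed (use assms in simp)

lemma succ_max_greatest:
  assumes "finite S" "S \<noteq> {}"
  shows "succ_max N E S \<in> S" "\<forall>r\<in>S. r \<noteq> succ_max N E S \<longrightarrow> succ N E (succ_max N E S) r"
proof -
  obtain m where "m \<in> S" "\<forall>r\<in>S. r \<noteq> m \<longrightarrow> succ N E m r"
    using ex_succ_greatest[OF assms] by blast
  moreover from this have "succ_max N E S = m" by (rule succ_max_eqI)
  ultimately show "succ_max N E S \<in> S"
    "\<forall>r\<in>S. r \<noteq> succ_max N E S \<longrightarrow> succ N E (succ_max N E S) r" by simp_all
qed

lemma r1_in_roots: "forest N E \<Longrightarrow> roots N E \<noteq> {} \<Longrightarrow> r1 N E \<in> roots N E"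
  unfolding r1_def by (rule succ_max_greatest(1)[OF finite_roots])

lemma succ_r1:
  assumes "forest N E" "r \<in> roots N E" "r \<noteq> r1 N E"
  shows "succ N E (r1 N E) r"
  using succ_max_greatest(2)[OF finite_roots[OF assms(1)], of N E, folded r1_def] assms(2,3) by blast

lemma succ_roots_but_r1_iff_succ_r2:
  assumes "forest N E" "roots N E \<noteq> {}"
  shows "(\<forall>r\<in>roots N E - {r1 N E}. succ N E x r) \<longleftrightarrow>
    (2 \<le> card (roots N E) \<longrightarrow> succ N E x (r2 N E))"
proof (cases "2 \<le> card (roots N E)")
  case True
  let ?R = "roots N E - {r1 N E}"
  have "finite ?R" using finite_roots[OF assms(1)] by simp
  have "card ?R = card (roots N E) - 1"
    using r1_in_roots[OF assms] finite_roots[OF assms(1)] by (simp add: card_Diff_singleton)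
  with True have "?R \<noteq> {}" by (intro notI) simp
  note r2 = succ_max_greatest[OF \<open>finite ?R\<close> this, of N E, folded r2_def]
  have "(\<forall>r\<in>?R. succ N E x r) \<longleftrightarrow> succ N E x (r2 N E)"
  proof
    assume x_r2: "succ N E x (r2 N E)"
    show "\<forall>r\<in>?R. succ N E x r"
    proof
      fix r assume "r \<in> ?R"
      then show "succ N E x r" using x_r2 r2(2) succ_trans by (cases "r = r2 N E") blast+
    qed
  qed (use r2(1) in simp)
  with True show ?thesis by simp
next
  case False
  then have "card (roots N E) \<le> Suc 0" by simp
  then have "roots N E - {r1 N E} = {}"
    using r1_in_roots[OF assms] card_le_Suc0_iff_eq[OF finite_roots[OF assms(1)]] by blast
  then have "\<forall>r\<in>roots N E - {r1 N E}. succ N E x r" by blast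
  with False show ?thesis by simp
qed

definition succ_half :: "'a set \<Rightarrow> ('a \<times> 'a) set \<Rightarrow> 'a::linorder \<Rightarrow> 'a \<Rightarrow> bool" where
  "succ_half N E x r \<longleftrightarrow>
     real (P N E r) / 2 < real (P N E x) \<or> (real (P N E x) = real (P N E r) / 2 \<and> x < r)"

lemma diff_less_iff_half_less:
  fixes a b :: nat
  assumes "a \<le> b"
  shows "(b - a < a \<or> (a = b - a \<and> Q)) \<longleftrightarrow> (real b / 2 < real a \<or> (real a = real b / 2 \<and> Q))"
proof -
  have "b - a < a \<longleftrightarrow> real b / 2 < real a" using assms by linarith
  moreover have "a = b - a \<longleftrightarrow> real a = real b / 2" using assms by linarith
  ultimately show ?thesis by simp
qed

lemma mem_A_iff_succ_roots:
  assumes "forest N E" "x \<in> N"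
  shows "x \<in> A N E \<longleftrightarrow> (\<forall>r\<in>roots N E - {x}. succ N (cut E x) x r)"
proof -
  have roots: "roots N (cut E x) = insert x (roots N E)" using roots_cut[OF assms(2)] .
  then have "finite (roots N (cut E x))" using finite_roots[OF assms(1)] by simp
  note r1_cut = succ_max_greatest[OF this, of N "cut E x", folded r1_def]
  have "x \<in> A N E \<longleftrightarrow> r1 N (cut E x) = x" unfolding A_def using assms(2) by auto
  also have "\<dots> \<longleftrightarrow> (\<forall>r\<in>roots N (cut E x). r \<noteq> x \<longrightarrow> succ N (cut E x) x r)"
  proof
    assume "r1 N (cut E x) = x"
    then show "\<forall>r\<in>roots N (cut E x). r \<noteq> x \<longrightarrow> succ N (cut E x) x r"
      using r1_cut(2) roots by simp
  next
    assume "\<forall>r\<in>roots N (cut E x). r \<noteq> x \<longrightarrow> succ N (cut E x) x r"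
    then show "r1 N (cut E x) = x" unfolding r1_def using roots by (intro succ_max_eqI) auto
  qed
  finally show ?thesis using roots by blast
qed

lemma root_mem_A_iff:
  assumes "forest N E" "x \<in> roots N E"
  shows "x \<in> A N E \<longleftrightarrow> x \<in> subtree N E (r1 N E) \<and> succ_half N E x (r1 N E) \<and>
    (2 \<le> card (roots N E) \<longrightarrow> succ N E x (r2 N E))"
proof -
  have "x \<in> N" using assms(2) unfolding roots_def by simp
  then have "x \<in> A N E \<longleftrightarrow> x = r1 N (cut E x)" unfolding A_def by simp
  then have A_iff: "x \<in> A N E \<longleftrightarrow> x = r1 N E" by (simp add: cut_root[OF assms(2)])
  have roots_ne: "roots N E \<noteq> {}" using assms(2) by blast
  show ?thesis
  proof (cases "x = r1 N E")
    case True
    have "succ_half N E x (r1 N E)"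
      using P_pos[OF assms(1) \<open>x \<in> N\<close>] True unfolding succ_half_def by simp
    moreover have "\<forall>r\<in>roots N E - {r1 N E}. succ N E x r" using succ_r1[OF assms(1)] True by blast
    ultimately show ?thesis
      using A_iff root_in_subtree_iff[OF assms(2)] True succ_roots_but_r1_iff_succ_r2[OF assms(1) roots_ne]
      by simp
  qed (use A_iff root_in_subtree_iff[OF assms(2)] in simp)
qed

lemma mem_A_below_root_iff:
  assumes "forest N E" "r \<in> roots N E" "x \<in> subtree N E r" "x \<noteq> r"
  shows "x \<in> A N E \<longleftrightarrow> succ_half N E x r \<and> (\<forall>r'\<in>roots N E - {r}. succ N E x r')"
proof -
  have x: "x \<in> N" "(x, r) \<in> E\<^sup>*" using assms(3) unfolding subtree_def by simp_all
  have "x \<notin> roots N E" using rtrancl_from_root[of x N E r] x(2) assms(4) by blast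
  then have roots: "roots N E - {x} = insert r (roots N E - {r})" using assms(2) by blast
  have Px: "P N (cut E x) x = P N E x" unfolding P_def subtree_cut_self[OF assms(1)] ..
  have Pr: "P N (cut E x) r = P N E r - P N E x"
    unfolding P_def subtree_cut_above[OF assms(1) x(2) assms(4)]
    using finite_subtree[OF assms(1)] subtree_mono[OF x(2)] by (simp add: card_Diff_subset)
  have succ_r: "succ N (cut E x) x r \<longleftrightarrow> succ_half N E x r"
    unfolding succ_def succ_half_def Px Pr
    using P_less_P_above[OF assms(1) x(2) assms(4)] by (intro diff_less_iff_half_less) simp
  have "succ N (cut E x) x r' \<longleftrightarrow> succ N E x r'" if "r' \<in> roots N E - {r}" for r'
  proof -
    have "(x, r') \<notin> E\<^sup>*" using root_above_unique[OF assms(1,2) _ x(2), of r'] that by blast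
    then have "subtree N (cut E x) r' = subtree N E r'" by (rule subtree_cut_unreachable)
    then show ?thesis unfolding succ_def Px unfolding P_def by simp
  qed
  then have succ_others: "(\<forall>r'\<in>roots N E - {r}. succ N (cut E x) x r') \<longleftrightarrow>
      (\<forall>r'\<in>roots N E - {r}. succ N E x r')" by blast
  show ?thesis
    unfolding mem_A_iff_succ_roots[OF assms(1) x(1)] roots ball_simps succ_r succ_others ..
qed

lemma nonroot_mem_A_iff:
  assumes "forest N E" "x \<in> N" "x \<notin> roots N E"
  shows "x \<in> A N E \<longleftrightarrow> x \<in> subtree N E (r1 N E) \<and> succ_half N E x (r1 N E) \<and>
    (2 \<le> card (roots N E) \<longrightarrow> succ N E x (r2 N E))"
proof -
  obtain r where r: "r \<in> roots N E" "(x, r) \<in> E\<^sup>*" using ex_root_above[OF assms(1,2)] by blast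
  then have x_r: "x \<in> subtree N E r" using assms(2) unfolding subtree_def by simp
  have x_ne_r: "x \<noteq> r" using r(1) assms(3) by blast
  have roots_ne: "roots N E \<noteq> {}" using r(1) by blast
  note r1_root = r1_in_roots[OF assms(1) roots_ne]
  note below = mem_A_below_root_iff[OF assms(1) r(1) x_r x_ne_r]
  show ?thesis
  proof (cases "r = r1 N E")
    case True
    then show ?thesis using below x_r succ_roots_but_r1_iff_succ_r2[OF assms(1) roots_ne] by simp
  next
    case False
    have "x \<notin> subtree N E (r1 N E)"
    proof
      assume "x \<in> subtree N E (r1 N E)"
      then have "(x, r1 N E) \<in> E\<^sup>*" unfolding subtree_def by simp
      with root_above_unique[OF assms(1) r(1) r1_root r(2)] False show False by simp
    qed
    moreover have "succ N E r x"
      using P_less_P_above[OF assms(1) r(2) x_ne_r] unfolding succ_def by simp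
    then have "\<not> succ N E x (r1 N E)"
      using succ_asym[OF succ_trans[OF succ_r1[OF assms(1) r(1) False]]] by blast
    with below have "x \<notin> A N E" using r1_root False by blast
    ultimately show ?thesis by simp
  qed
qed

lemma A_eq:
  assumes "forest N E"
  shows "A N E = {x \<in> subtree N E (r1 N E). succ_half N E x (r1 N E) \<and>
    (2 \<le> card (roots N E) \<longrightarrow> succ N E x (r2 N E))}"
proof -
  have "A N E \<subseteq> N" "subtree N E (r1 N E) \<subseteq> N" unfolding A_def subtree_def by auto
  moreover have "x \<in> A N E \<longleftrightarrow> x \<in> subtree N E (r1 N E) \<and> succ_half N E x (r1 N E) \<and>
      (2 \<le> card (roots N E) \<longrightarrow> succ N E x (r2 N E))" if "x \<in> N" for x
    using root_mem_A_iff[OF assms] nonroot_mem_A_iff[OF assms that] by blast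
  ultimately show ?thesis by blast
qed

theorem claim2:
  fixes N :: "'a::linorder set" and E :: "('a \<times> 'a) set"
  assumes "forest N E"
  shows "A N E =
    {x \<in> subtree N E (r1 N E).
       (real (P N E x) > real (P N E (r1 N E)) / 2 \<or>
        (real (P N E x) = real (P N E (r1 N E)) / 2 \<and> x < r1 N E)) \<and>
       (card (roots N E) \<ge> 2 \<longrightarrow>
        (P N E x > P N E (r2 N E) \<or> (P N E x = P N E (r2 N E) \<and> x < r2 N E)))}"
  using A_eq[OF assms] unfolding succ_half_def succ_def .

end
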